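(* Let $n>2$ and $|h|<1$. (i) The integral $$g_\alpha(h)=\frac{1}{\Gamma(\alpha/2)}\int_{-1}^1|t-h|^{\alpha-1}(1-t^2)^{(n-3)/2}\,dt,\qquad \operatorname{Re}\alpha>0,$$ extends as an entire function of $\alpha$, and this extension represents a $C^\infty$ function of $h$ uniformly in $\alpha\in K$ for any compact subset $K$ of the complex plane. (ii) The value of this extension at $\alpha=3-n$ equals $\Gamma((n-1)/2)$. *)

theory Defs
  imports "HOL-Analysis.Analysis"
begin

definition g_int :: "nat \<Rightarrow> complex \<Rightarrow> real \<Rightarrow> complex" where
  "g_int n \<alpha> h = (1 / Gamma (\<alpha> / 2)) *
     integral {-1..1} (\<lambda>t. (complex_of_real \<bar>t - h\<bar>) powr (\<alpha> - 1)
                           * complex_of_real ((1 - t\<^sup>2) powr ((real n - 3) / 2)))"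

end

theory Submission
  imports Defs "HOL-Complex_Analysis.Complex_Analysis"
begin

text \<open>Write \<open>b = (n - 3) / 2\<close>. For \<open>|h| < 1\<close> the substitution \<open>t = (x + h) / (1 + h x)\<close>, a
  bijection of \<open>[-1, 1]\<close>, turns the integral into
  \<open>(1 - h\<^sup>2)\<^bsup>\<alpha> + b\<^esup> \<integral> |x|\<^bsup>\<alpha> - 1\<^esup> (1 - x\<^sup>2)\<^bsup>b\<^esup> (1 + h x)\<^bsup>-(\<alpha> + 2b + 1)\<^esup> dx\<close>.
  Expanding the last factor binomially and integrating termwise against the moments of
  \<open>|x|\<^bsup>\<alpha> - 1\<^esup> (1 - x\<^sup>2)\<^bsup>b\<^esup>\<close>, which are Beta values, yields a power series in \<open>h\<^sup>2\<close>. After division by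
  \<open>\<Gamma>(\<alpha>/2)\<close> its coefficients are entire in \<open>\<alpha>\<close> and locally uniformly dominated by a convergent
  series, so the closed form extends to all \<open>\<alpha>\<close>, jointly continuous in \<open>(\<alpha>, h)\<close> and holomorphic in
  \<open>h\<close> on the unit disc; the Cauchy estimates make every \<open>h\<close>-derivative jointly continuous as well.
  At \<open>\<alpha> = 3 - n = -2b\<close> the series collapses to the binomial series of \<open>(1 - h\<^sup>2)\<^bsup>b\<^esup>\<close>, which
  cancels the prefactor and leaves \<open>\<Gamma>(b + 1) = \<Gamma>((n - 1)/2)\<close>.\<close>

section \<open>Beta integrals on the unit interval\<close>

lemma has_integral_powr_one_minus_sq_real:
  fixes s b :: real
  assumes s: "s > 0" and b: "b > -1"
  shows "((\<lambda>x. x powr (s - 1) * (1 - x\<^sup>2) powr b) has_integral Beta (s/2) (b + 1) / 2) {0..1}"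
proof -
  let ?f = "\<lambda>y::real. y powr (s/2 - 1) * (1 - y) powr (b + 1 - 1)"
  have f_int: "(?f has_integral Beta (s/2) (b + 1)) {0..1}"
    using has_integral_Beta_real[of "s/2" "b + 1"] s b by simp
  then have f_abs: "?f absolutely_integrable_on {0..1}"
    by (intro nonnegative_absolutely_integrable_1 has_integral_integrable) auto
  have sq_image: "(\<lambda>x::real. x\<^sup>2) ` {0..1} = {0..1}"
  proof
    show "{0..1} \<subseteq> (\<lambda>x::real. x\<^sup>2) ` {0..1}"
    proof
      fix y :: real assume "y \<in> {0..1}"
      then show "y \<in> (\<lambda>x. x\<^sup>2) ` {0..1}"
        by (intro image_eqI[of _ _ "sqrt y"]) auto
    qed
  qed (auto simp: power_le_one)
  have sq_deriv: "((\<lambda>x::real. x\<^sup>2) has_field_derivative 2 * x) (at x within {0..1})"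
    if "x \<in> {0..1}" for x
    by (auto intro!: derivative_eq_intros)
  have sq_inj: "inj_on (\<lambda>x::real. x\<^sup>2) {0..1}"
    by (auto simp: inj_on_def power2_eq_iff)
  have "(\<lambda>x. \<bar>2 * x\<bar> *\<^sub>R ?f (x\<^sup>2)) absolutely_integrable_on {0..1} \<and>
        integral {0..1} (\<lambda>x. \<bar>2 * x\<bar> *\<^sub>R ?f (x\<^sup>2)) = Beta (s/2) (b + 1)"
    using has_absolute_integral_change_of_variables_real[OF _ sq_deriv sq_inj, of ?f "Beta (s/2) (b + 1)"]
      f_abs integral_unique[OF f_int] sq_image by simp
  then have subst: "((\<lambda>x. \<bar>2 * x\<bar> *\<^sub>R ?f (x\<^sup>2)) has_integral Beta (s/2) (b + 1)) {0..1}"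
    using absolutely_integrable_on_def has_integral_integrable_integral by blast
  have integrand: "\<bar>2 * x\<bar> *\<^sub>R ?f (x\<^sup>2) = 2 * (x powr (s - 1) * (1 - x\<^sup>2) powr b)"
    if "x \<in> {0..1}" for x
  proof (cases "x = 0")
    case False
    with that have x: "x > 0" by auto
    have "x\<^sup>2 = x powr 2" using x powr_realpow[of x 2] by simp
    then have "(x\<^sup>2) powr (s/2 - 1) = x powr (2 * (s/2 - 1))" by (simp add: powr_powr)
    then have "(x\<^sup>2) powr (s/2 - 1) = x powr (s - 2)"
      by (simp add: algebra_simps)
    moreover have "x * x powr (s - 2) = x powr (s - 1)"
      using x powr_add[of x 1 "s - 2"] by simp
    ultimately show ?thesis using x by (simp add: mult_ac)
  qed simp
  have "((\<lambda>x. 2 * (x powr (s - 1) * (1 - x\<^sup>2) powr b)) has_integral Beta (s/2) (b + 1)) {0..1}"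
    by (rule has_integral_eq[OF _ subst]) (rule integrand)
  from has_integral_mult_right[OF this, of "1/2"] show ?thesis by simp
qed

lemma borel_measurable_continuous_on_Diff_finite:
  fixes f :: "real \<Rightarrow> 'b::euclidean_space"
  assumes "continuous_on (S - X) f" "finite X" "S \<in> sets lebesgue"
  shows "f \<in> borel_measurable (lebesgue_on S)"
proof -
  have SX: "S - X \<in> sets lebesgue"
    using assms(3) negligible_imp_sets[OF negligible_finite[OF assms(2)]] by (rule sets.Diff)
  have "f measurable_on (S - X)"
    using continuous_imp_measurable_on_sets_lebesgue[OF assms(1) SX]
      measurable_on_iff_borel_measurable[OF SX] by blast
  moreover have "negligible ((S - X - S) \<union> (S - (S - X)))"
    by (rule negligible_subset[of X]) (use assms(2) in auto)
  ultimately have "f measurable_on S" by (rule measurable_on_spike_set)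
  then show ?thesis using measurable_on_iff_borel_measurable[OF assms(3)] by blast
qed

lemma absolutely_integrable_powr_mult_continuous:
  fixes W :: "real \<Rightarrow> complex"
  assumes W: "continuous_on {0..1} W" and s: "Re s > 0"
  shows "(\<lambda>x. of_real x powr (s - 1) * W x) absolutely_integrable_on {0..1}"
proof -
  obtain M where M: "\<And>x. x \<in> {0..1} \<Longrightarrow> norm (W x) \<le> M"
    using compact_imp_bounded[OF compact_continuous_image[OF W compact_Icc]]
    unfolding bounded_iff by blast
  show ?thesis
  proof (rule measurable_bounded_by_integrable_imp_absolutely_integrable)
    show "(\<lambda>x. of_real x powr (s - 1) * W x) \<in> borel_measurable (lebesgue_on {0..1})"
    proof (rule borel_measurable_continuous_on_Diff_finite[where X="{0}"])
      show "continuous_on ({0..1} - {0}) (\<lambda>x. of_real x powr (s - 1) * W x)"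
        by (intro continuous_intros continuous_on_subset[OF W]) auto
    qed auto
    show "(\<lambda>x. M * x powr (Re s - 1)) integrable_on {0..1}"
      using integrable_cmul[OF integrable_on_powr_from_0[of "Re s - 1" 1], of M] s by simp
    fix x :: real assume x: "x \<in> {0..1}"
    have "norm (of_real x powr (s - 1) * W x) = x powr (Re s - 1) * norm (W x)"
      using x by (simp add: norm_mult norm_powr_real_powr)
    also have "\<dots> \<le> x powr (Re s - 1) * M"
      using M[OF x] by (intro mult_left_mono) auto
    finally show "norm (of_real x powr (s - 1) * W x) \<le> M * x powr (Re s - 1)"
      by (simp add: mult.commute)
  qed auto
qed

lemma holomorphic_integral_powr_mult_truncated:
  fixes W :: "real \<Rightarrow> complex"
  assumes W: "continuous_on {0..1} W" and e: "0 < e"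
  shows "(\<lambda>s. integral {e..1} (\<lambda>x. of_real x powr (s - 1) * W x)) holomorphic_on UNIV"
  unfolding cbox_interval[symmetric]
proof (rule leibniz_rule_holomorphic[where fx = "\<lambda>s x. Ln (of_real x) * of_real x powr (s - 1) * W x"])
  fix s and x :: real assume "x \<in> cbox e 1"
  then have "x > 0" using e by auto
  then show "((\<lambda>s. of_real x powr (s - 1) * W x) has_field_derivative
               Ln (of_real x) * of_real x powr (s - 1) * W x) (at s within UNIV)"
    by (auto intro!: derivative_eq_intros simp: powr_def)
next
  fix s
  show "(\<lambda>x. of_real x powr (s - 1) * W x) integrable_on cbox e 1"
    using e by (intro integrable_continuous continuous_intros continuous_on_subset[OF W]) auto
next
  let ?U = "UNIV \<times> cbox e 1"
  have "continuous_on ?U (\<lambda>p. Ln (of_real (snd p)) * exp ((fst p - 1) * Ln (of_real (snd p))) * W (snd p))"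
    using e by (intro continuous_intros continuous_on_compose2[OF W])
      (auto simp: nonpos_Reals_def)
  then show "continuous_on ?U (\<lambda>(s, x). Ln (of_real x) * of_real x powr (s - 1) * W x)"
    by (rule continuous_on_cong[THEN iffD1, rotated 2]) (use e in \<open>auto simp: powr_def\<close>)
qed auto

lemma norm_integral_powr_mult_initial_le:
  fixes W :: "real \<Rightarrow> complex"
  assumes W: "continuous_on {0..1} W" and M: "\<And>x. x \<in> {0..1} \<Longrightarrow> norm (W x) \<le> M"
    and d: "0 < d" "d \<le> Re s" and e: "0 \<le> e" "e \<le> 1"
  shows "norm (integral {0..e} (\<lambda>x. of_real x powr (s - 1) * W x)) \<le> M * (e powr d / d)"
proof -
  have "(\<lambda>x. of_real x powr (s - 1) * W x) integrable_on {0..1}"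
    using absolutely_integrable_powr_mult_continuous[OF W] d by (simp add: absolutely_integrable_on_def)
  then have "norm (integral {0..e} (\<lambda>x. of_real x powr (s - 1) * W x))
               \<le> integral {0..e} (\<lambda>x. M * x powr (d - 1))"
  proof (rule integral_norm_bound_integral[OF integrable_on_subinterval])
    show "(\<lambda>x. M * x powr (d - 1)) integrable_on {0..e}"
      using integrable_cmul[OF integrable_on_powr_from_0[of "d - 1" e], of M] d e by simp
    fix x assume x: "x \<in> {0..e}"
    have "norm (of_real x powr (s - 1) * W x) = x powr (Re s - 1) * norm (W x)"
      using x by (simp add: norm_mult norm_powr_real_powr)
    also have "\<dots> \<le> x powr (d - 1) * M"
      using M[of x] x e d by (intro mult_mono powr_mono') auto
    finally show "norm (of_real x powr (s - 1) * W x) \<le> M * x powr (d - 1)"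
      by (simp add: mult.commute)
  qed (use e in auto)
  also have "\<dots> = M * (e powr d / d)"
    using has_integral_powr_from_0[of "d - 1" e] d e
    by (subst integral_mult_right) (simp add: integral_unique)
  finally show ?thesis .
qed

lemma uniform_limit_integral_powr_mult_truncated:
  fixes W :: "real \<Rightarrow> complex"
  assumes W: "continuous_on {0..1} W" and d: "d > 0"
  shows "uniform_limit {s. Re s \<ge> d}
           (\<lambda>N s. integral {inverse (Suc N)..1} (\<lambda>x. of_real x powr (s - 1) * W x))
           (\<lambda>s. integral {0..1} (\<lambda>x. of_real x powr (s - 1) * W x)) sequentially"
proof (rule uniform_limitI)
  fix \<epsilon> :: real assume "\<epsilon> > 0"
  define e :: "nat \<Rightarrow> real" where "e N = inverse (Suc N)" for N
  have e: "0 < e N" "e N \<le> 1" for N by (auto simp: e_def field_simps)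
  obtain M where M: "\<And>x. x \<in> {0..1} \<Longrightarrow> norm (W x) \<le> M"
    using compact_imp_bounded[OF compact_continuous_image[OF W compact_Icc]]
    unfolding bounded_iff by blast
  have "(\<lambda>N. M * (e N powr d / d)) \<longlonglongrightarrow> M * (0 / d)"
    unfolding e_def using d by (intro tendsto_intros tendsto_zero_powrI LIMSEQ_inverse_real_of_nat) auto
  with \<open>\<epsilon> > 0\<close> have "\<forall>\<^sub>F N in sequentially. M * (e N powr d / d) < \<epsilon>"
    by (auto dest: order_tendstoD)
  then show "\<forall>\<^sub>F N in sequentially. \<forall>s\<in>{s. Re s \<ge> d}.
               dist (integral {inverse (Suc N)..1} (\<lambda>x. of_real x powr (s - 1) * W x))
                    (integral {0..1} (\<lambda>x. of_real x powr (s - 1) * W x)) < \<epsilon>"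
  proof eventually_elim
    case (elim N)
    show ?case
    proof
      fix s assume s: "s \<in> {s. Re s \<ge> d}"
      have "(\<lambda>x. of_real x powr (s - 1) * W x) integrable_on {0..1}"
        using absolutely_integrable_powr_mult_continuous[OF W] s d
        by (simp add: absolutely_integrable_on_def)
      then have "integral {0..1} (\<lambda>x. of_real x powr (s - 1) * W x) =
                   integral {0..e N} (\<lambda>x. of_real x powr (s - 1) * W x) +
                   integral {e N..1} (\<lambda>x. of_real x powr (s - 1) * W x)"
        using e[of N] by (intro Henstock_Kurzweil_Integration.integral_combine[symmetric]) auto
      moreover have "norm (integral {0..e N} (\<lambda>x. of_real x powr (s - 1) * W x)) \<le> M * (e N powr d / d)"
        using norm_integral_powr_mult_initial_le[OF W M d] s e[of N] by auto
      ultimately show "dist (integral {inverse (Suc N)..1} (\<lambda>x. of_real x powr (s - 1) * W x))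
                            (integral {0..1} (\<lambda>x. of_real x powr (s - 1) * W x)) < \<epsilon>"
        using elim by (simp add: dist_norm e_def)
    qed
  qed
qed

lemma holomorphic_on_mellin_unit_interval:
  fixes W :: "real \<Rightarrow> complex"
  assumes W: "continuous_on {0..1} W"
  shows "(\<lambda>s. integral {0..1} (\<lambda>x. of_real x powr (s - 1) * W x)) holomorphic_on {s. Re s > 0}"
proof (rule holomorphic_uniform_sequence[where
      f = "\<lambda>N s. integral {inverse (Suc N)..1} (\<lambda>x. of_real x powr (s - 1) * W x)"])
  show "(\<lambda>s. integral {inverse (Suc N)..1} (\<lambda>x. of_real x powr (s - 1) * W x)) holomorphic_on {s. Re s > 0}"
    for N by (rule holomorphic_on_subset[OF holomorphic_integral_powr_mult_truncated[OF W]]) auto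
  fix s0 :: complex assume s0: "s0 \<in> {s. Re s > 0}"
  define d where "d = Re s0 / 2"
  have d: "d > 0" using s0 by (simp add: d_def)
  have ball_Re: "cball s0 d \<subseteq> {s. Re s \<ge> d}"
  proof
    fix s assume "s \<in> cball s0 d"
    then have "\<bar>Re s0 - Re s\<bar> \<le> d"
      using abs_Re_le_cmod[of "s0 - s"] by (simp add: dist_norm)
    then show "s \<in> {s. Re s \<ge> d}" unfolding d_def abs_le_iff by simp
  qed
  moreover have "{s. Re s \<ge> d} \<subseteq> {s. Re s > 0}" using d by auto
  ultimately show "\<exists>d>0. cball s0 d \<subseteq> {s. Re s > 0} \<and>
      uniform_limit (cball s0 d) (\<lambda>N s. integral {inverse (Suc N)..1} (\<lambda>x. of_real x powr (s - 1) * W x))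
        (\<lambda>s. integral {0..1} (\<lambda>x. of_real x powr (s - 1) * W x)) sequentially"
    using d uniform_limit_on_subset[OF uniform_limit_integral_powr_mult_truncated[OF W d] ball_Re]
    by blast
qed (simp add: open_halfspace_Re_gt)

lemma analytic_continuation_pos_Reals:
  assumes f: "f holomorphic_on {s. Re s > 0}" and g: "g holomorphic_on {s. Re s > 0}"
    and eq: "\<And>r. r > 0 \<Longrightarrow> f (of_real r) = g (of_real r)" and s: "Re s > 0"
  shows "f s = g s"
proof -
  have "f s - g s = 0"
  proof (rule analytic_continuation[of "\<lambda>s. f s - g s" "{s. Re s > 0}" "of_real ` {0<..}" 1])
    show "(\<lambda>s. f s - g s) holomorphic_on {s. Re s > 0}" by (intro holomorphic_intros f g)
    show "open {s. Re s > 0}" by (simp add: open_halfspace_Re_gt)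
    show "connected {s. Re s > 0}" by (intro convex_connected convex_halfspace_Re_gt)
    show "(1::complex) islimpt of_real ` {0<..}"
      unfolding islimpt_approachable
    proof (intro allI impI)
      fix e :: real assume e: "e > 0"
      have "dist (complex_of_real (1 + e/2)) 1 = e/2"
        using e by (simp add: dist_norm)
      moreover have "complex_of_real (1 + e/2) \<noteq> 1" using e by (simp add: complex_eq_iff)
      moreover have "complex_of_real (1 + e/2) \<in> of_real ` {0<..}" using e by (intro imageI) auto
      ultimately show "\<exists>x\<in>(of_real ` {0<..} :: complex set). x \<noteq> 1 \<and> dist x 1 < e"
        using e by (intro bexI[of _ "complex_of_real (1 + e/2)"]) auto
    qed
  qed (use eq s in auto)
  then show ?thesis by simp
qed

lemma has_integral_cpowr_one_minus_sq:
  fixes b :: real and s :: complex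
  assumes b: "b \<ge> 0" and s: "Re s > 0"
  shows "((\<lambda>x. of_real x powr (s - 1) * of_real ((1 - x\<^sup>2) powr b)) has_integral
           Beta (s/2) (of_real b + 1) / 2) {0..1}"
proof -
  \<comment> \<open>Since \<open>0 powr 0 = 0\<close>, for \<open>b = 0\<close> the weight drops to \<open>0\<close> at \<open>x = 1\<close>;
    \<open>W\<close> is its continuous version.\<close>
  define W where "W x = complex_of_real (if b = 0 then 1 else (1 - x\<^sup>2) powr b)" for x :: real
  have W_eq: "of_real ((1 - x\<^sup>2) powr b) = W x" if "x \<in> {0..1} - {1}" for x
    using that by (auto simp: W_def power2_eq_1_iff)
  have W_cont: "continuous_on {0..1} W"
    unfolding W_def using b
    by (cases "b = 0") (auto intro!: continuous_intros continuous_on_powr' simp: power_le_one)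
  define F where "F s = integral {0..1} (\<lambda>x. of_real x powr (s - 1) * W x)" for s
  have b_nonpos_Ints: "of_real b + 1 \<notin> (\<int>\<^sub>\<le>\<^sub>0 :: complex set)"
    using b by (auto simp: complex_nonpos_Reals_iff dest!: nonpos_Ints_subset_nonpos_Reals[THEN subsetD])
  have "F s = Beta (s/2) (of_real b + 1) / 2"
  proof (rule analytic_continuation_pos_Reals[OF _ _ _ s])
    show "F holomorphic_on {s. Re s > 0}"
      unfolding F_def[abs_def] by (rule holomorphic_on_mellin_unit_interval[OF W_cont])
    show "(\<lambda>s. Beta (s/2) (of_real b + 1) / 2) holomorphic_on {s. Re s > 0}"
      using b_nonpos_Ints by (intro holomorphic_intros) (auto elim!: nonpos_Ints_cases)
    fix r :: real assume r: "r > 0"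
    have "((\<lambda>x. x powr (r - 1) * (1 - x\<^sup>2) powr b) has_integral Beta (r/2) (b + 1) / 2) {0..1}"
      using has_integral_powr_one_minus_sq_real[OF r] b by simp
    from has_integral_linear[OF this bounded_linear_of_real[where 'a=complex]]
    have "((\<lambda>x. of_real x powr (of_real r - 1) * of_real ((1 - x\<^sup>2) powr b)) has_integral
            complex_of_real (Beta (r/2) (b + 1) / 2)) {0..1}"
      by (rule has_integral_eq[rotated]) (simp add: powr_of_real[symmetric])
    then have "((\<lambda>x. of_real x powr (of_real r - 1) * W x) has_integral
                 complex_of_real (Beta (r/2) (b + 1) / 2)) {0..1}"
      by (rule has_integral_spike_finite[of "{1}", rotated 2]) (use W_eq in auto)
    then show "F (of_real r) = Beta (of_real r / 2) (of_real b + 1) / 2"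
      unfolding F_def using Beta_complex_of_real[of "r/2" "b + 1"] by (simp add: integral_unique)
  qed
  moreover have "(\<lambda>x. of_real x powr (s - 1) * W x) integrable_on {0..1}"
    using absolutely_integrable_powr_mult_continuous[OF W_cont s] absolutely_integrable_on_def by blast
  ultimately have "((\<lambda>x. of_real x powr (s - 1) * W x) has_integral Beta (s/2) (of_real b + 1) / 2) {0..1}"
    unfolding F_def by (simp add: has_integral_integrable_integral)
  then show ?thesis
    by (rule has_integral_spike_finite[of "{1}", rotated 2]) (use W_eq in auto)
qed

lemma has_integral_abs_powr_moment:
  fixes b :: real and \<alpha> :: complex
  assumes b: "b \<ge> 0" and \<alpha>: "Re \<alpha> > 0"
  shows "((\<lambda>x. of_real \<bar>x\<bar> powr (\<alpha> - 1) * of_real ((1 - x\<^sup>2) powr b) * of_real x ^ m) has_integral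
           (1 + (-1)^m) * (Beta ((\<alpha> + of_nat m)/2) (of_real b + 1) / 2)) {-1..1}"
proof -
  define V where "V = Beta ((\<alpha> + of_nat m)/2) (of_real b + 1) / 2"
  define f where "f x = of_real \<bar>x\<bar> powr (\<alpha> - 1) * of_real ((1 - x\<^sup>2) powr b) * (of_real x ^ m :: complex)"
    for x :: real
  have pos: "((\<lambda>x. of_real x powr ((\<alpha> + of_nat m) - 1) * of_real ((1 - x\<^sup>2) powr b)) has_integral V) {0..1}"
    unfolding V_def using \<alpha> by (intro has_integral_cpowr_one_minus_sq[OF b]) simp
  have powr_power: "of_real x powr (\<alpha> - 1) * (of_real x ^ m :: complex) = of_real x powr ((\<alpha> + of_nat m) - 1)"
    if "x > 0" for x :: real
    using that by (simp add: powr_add[symmetric] algebra_simps flip: powr_complexpow)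
  have right: "(f has_integral V) {0..1}"
  proof (rule has_integral_spike_finite[of "{0}", rotated 2, OF pos])
    fix x :: real assume "x \<in> {0..1} - {0}"
    then have x: "x > 0" by auto
    show "f x = of_real x powr ((\<alpha> + of_nat m) - 1) * of_real ((1 - x\<^sup>2) powr b)"
      using powr_power[OF x] x by (simp add: f_def mult_ac)
  qed auto
  have "((\<lambda>x. f (- x)) has_integral (-1)^m * V) {0..1}"
  proof (rule has_integral_spike_finite[of "{0}", rotated 2, OF has_integral_mult_right[OF pos]])
    fix x :: real assume "x \<in> {0..1} - {0}"
    then have x: "x > 0" by auto
    have "f (-x) = (-1)^m * (of_real x powr (\<alpha> - 1) * of_real x ^ m * of_real ((1 - x\<^sup>2) powr b))"
      using x by (simp add: f_def power_minus[of "complex_of_real x"] mult_ac)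
    then show "f (-x) = (-1)^m * (of_real x powr ((\<alpha> + of_nat m) - 1) * of_real ((1 - x\<^sup>2) powr b))"
      using powr_power[OF x] by simp
  qed auto
  then have "((\<lambda>x. (\<lambda>y. f (- y)) (- x)) has_integral (-1)^m * V) {-1..-0}"
    by (rule has_integral_reflect_real[THEN iffD2])
  then have left: "(f has_integral (-1)^m * V) {-1..0}" by simp
  have "(f has_integral ((-1)^m * V + V)) {-1..1}"
    by (rule has_integral_combine[OF _ _ left right]) auto
  also have "(-1)^m * V + V = (1 + (-1)^m) * V"
    by (simp add: algebra_simps)
  finally show ?thesis unfolding f_def V_def .
qed

section \<open>Estimates for binomial series\<close>

lemma pochhammer_nonneg':
  fixes x :: "'a::linordered_semidom"
  shows "0 \<le> x \<Longrightarrow> 0 \<le> pochhammer x n"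
  by (induction n) (auto simp: pochhammer_Suc)

lemma pochhammer_mono:
  fixes x y :: "'a::linordered_semidom"
  shows "0 \<le> x \<Longrightarrow> x \<le> y \<Longrightarrow> pochhammer x n \<le> pochhammer y n"
proof (induction n)
  case (Suc n)
  then show ?case
    by (simp add: pochhammer_Suc) (intro mult_mono, auto simp: pochhammer_nonneg')
qed simp

lemma norm_pochhammer_le:
  fixes z :: "'a::real_normed_field"
  shows "norm (pochhammer z n) \<le> pochhammer (norm z) n"
proof (induction n)
  case (Suc n)
  have "norm (pochhammer z (Suc n)) = norm (pochhammer z n) * norm (z + of_nat n)"
    by (simp add: pochhammer_Suc norm_mult)
  also have "\<dots> \<le> pochhammer (norm z) n * (norm z + of_nat n)"
    using norm_triangle_ineq[of z "of_nat n"]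
    by (intro mult_mono Suc.IH) (auto intro: pochhammer_nonneg')
  also have "\<dots> = pochhammer (norm z) (Suc n)" by (simp add: pochhammer_Suc)
  finally show ?case .
qed simp

lemma norm_gbinomial_minus_le:
  fixes c :: "'a::real_normed_field"
  shows "norm ((- c) gchoose n) \<le> pochhammer (norm c) n / fact n"
proof -
  have "norm ((- c) gchoose n) = norm (pochhammer c n) / fact n"
    by (simp add: gbinomial_pochhammer norm_mult norm_divide norm_power)
  also have "\<dots> \<le> pochhammer (norm c) n / fact n"
    by (intro divide_right_mono norm_pochhammer_le) auto
  finally show ?thesis .
qed

lemma summable_pochhammer_geometric:
  fixes r t :: real
  assumes "0 \<le> r" "0 \<le> t" "t < 1"
  shows "summable (\<lambda>n. pochhammer r n / fact n * t ^ n)"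
proof -
  have "summable (\<lambda>n. ((- r) gchoose n) * (- t) ^ n)"
    using gen_binomial_real[of "- t" "- r"] assms by (auto simp: sums_iff)
  moreover have "((- r) gchoose n) * (- t) ^ n = pochhammer r n / fact n * t ^ n" for n
  proof -
    have "((- r) gchoose n) * (- t) ^ n = ((-1)^n * (-1)^n) * (pochhammer r n / fact n * t ^ n)"
      by (simp add: gbinomial_pochhammer power_minus[of t])
    also have "(-1::real)^n * (-1)^n = 1" by (simp flip: power_mult_distrib)
    finally show ?thesis by simp
  qed
  ultimately show ?thesis by simp
qed

lemma summable_norm_gbinomial_minus:
  fixes c :: "'a::real_normed_field" and t :: real
  assumes "0 \<le> t" "t < 1"
  shows "summable (\<lambda>n. norm ((- c) gchoose n) * t ^ n)"
proof (rule summable_comparison_test[OF _ summable_pochhammer_geometric[of "norm c" t]])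
  show "\<exists>N. \<forall>n\<ge>N. norm (norm ((- c) gchoose n) * t ^ n) \<le> pochhammer (norm c) n / fact n * t ^ n"
  proof (intro exI[of _ 0] allI impI)
    fix n :: nat
    have "norm (norm ((- c) gchoose n) * t ^ n) = norm ((- c) gchoose n) * t ^ n"
      using assms by simp
    also have "\<dots> \<le> pochhammer (norm c) n / fact n * t ^ n"
      using assms by (intro mult_right_mono norm_gbinomial_minus_le) auto
    finally show "norm (norm ((- c) gchoose n) * t ^ n) \<le> pochhammer (norm c) n / fact n * t ^ n" .
  qed
qed (use assms in simp_all)


section \<open>The Moebius substitution\<close>

definition interval_moebius :: "real \<Rightarrow> real \<Rightarrow> real" where
  "interval_moebius h x = (x + h) / (1 + h * x)"

lemma interval_moebius_denominator_pos:
  fixes h x :: real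
  assumes "\<bar>h\<bar> < 1" "x \<in> {-1..1}"
  shows "1 + h * x > 0"
proof -
  have "\<bar>h\<bar> * \<bar>x\<bar> \<le> \<bar>h\<bar>" using assms by (intro mult_left_le) auto
  then have "\<bar>h * x\<bar> < 1" using assms by (simp add: abs_mult)
  then show ?thesis by linarith
qed

lemma has_field_derivative_interval_moebius:
  assumes "1 + h * x \<noteq> 0"
  shows "(interval_moebius h has_field_derivative (1 - h\<^sup>2) / (1 + h * x)\<^sup>2) (at x within S)"
  unfolding interval_moebius_def[abs_def] using assms
  by (auto intro!: derivative_eq_intros simp: field_simps power2_eq_square)

lemma inj_on_interval_moebius:
  assumes h: "\<bar>h\<bar> < 1"
  shows "inj_on (interval_moebius h) {-1..1}"
proof (rule inj_onI)
  fix x y assume x: "x \<in> {-1..1}" and y: "y \<in> {-1..1}" and "interval_moebius h x = interval_moebius h y"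
  moreover have "1 + h * x > 0" "1 + h * y > 0"
    using interval_moebius_denominator_pos[OF h] x y by auto
  ultimately have "(x - y) * (1 - h\<^sup>2) = 0"
    by (simp add: interval_moebius_def field_simps power2_eq_square)
  moreover have "1 - h\<^sup>2 \<noteq> 0" using h by (simp add: power2_eq_1_iff abs_if split: if_splits)
  ultimately show "x = y" by simp
qed

lemma interval_moebius_mem_Icc:
  assumes h: "\<bar>h\<bar> < 1" and x: "x \<in> {-1..1}"
  shows "interval_moebius h x \<in> {-1..1}"
proof -
  have "(1 - h) * (1 - x) \<ge> 0" "(1 + h) * (1 + x) \<ge> 0" using h x by auto
  then have "x + h \<le> 1 + h * x" "-(1 + h * x) \<le> x + h" by (auto simp: algebra_simps)
  then show ?thesis
    using interval_moebius_denominator_pos[OF h x] by (auto simp: interval_moebius_def field_simps)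
qed

lemma interval_moebius_inverse:
  assumes h: "\<bar>h\<bar> < 1" and t: "t \<in> {-1..1}"
  shows "interval_moebius h (interval_moebius (- h) t) = t"
proof -
  have p: "1 - h * t > 0" using interval_moebius_denominator_pos[of "- h" t] h t by auto
  have nz: "1 - h\<^sup>2 \<noteq> 0" using h by (simp add: power2_eq_1_iff abs_if split: if_splits)
  have e1: "1 + h * interval_moebius (- h) t = (1 - h\<^sup>2) / (1 - h * t)"
    using p by (simp add: interval_moebius_def field_simps power2_eq_square)
  have e2: "interval_moebius (- h) t + h = t * (1 - h\<^sup>2) / (1 - h * t)"
    using p by (simp add: interval_moebius_def field_simps power2_eq_square)
  have "interval_moebius h (interval_moebius (- h) t) = (t * (1 - h\<^sup>2) / (1 - h * t)) / ((1 - h\<^sup>2) / (1 - h * t))"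
    by (simp only: interval_moebius_def[of h "interval_moebius (- h) t"] e1 e2)
  also have "\<dots> = t" using p nz by simp
  finally show ?thesis .
qed

lemma interval_moebius_image:
  assumes h: "\<bar>h\<bar> < 1"
  shows "interval_moebius h ` {-1..1} = {-1..1}"
proof
  show "interval_moebius h ` {-1..1} \<subseteq> {-1..1}" using interval_moebius_mem_Icc[OF h] by auto
  show "{-1..1} \<subseteq> interval_moebius h ` {-1..1}"
  proof
    fix t :: real assume t: "t \<in> {-1..1}"
    have "interval_moebius (- h) t \<in> {-1..1}" using interval_moebius_mem_Icc[of "- h" t] h t by simp
    with interval_moebius_inverse[OF h t] show "t \<in> interval_moebius h ` {-1..1}" by force
  qed
qed

lemma interval_moebius_minus_shift:
  assumes "1 + h * x \<noteq> 0"
  shows "interval_moebius h x - h = x * (1 - h\<^sup>2) / (1 + h * x)"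
  using assms by (simp add: interval_moebius_def field_simps power2_eq_square)

lemma one_minus_interval_moebius_sq:
  assumes "1 + h * x \<noteq> 0"
  shows "1 - (interval_moebius h x)\<^sup>2 = (1 - x\<^sup>2) * (1 - h\<^sup>2) / (1 + h * x)\<^sup>2"
proof -
  have "1 - (interval_moebius h x)\<^sup>2 = ((1 + h * x)\<^sup>2 - (x + h)\<^sup>2) / (1 + h * x)\<^sup>2"
    using assms by (simp add: interval_moebius_def power_divide diff_divide_distrib)
  also have "(1 + h * x)\<^sup>2 - (x + h)\<^sup>2 = (1 - x\<^sup>2) * (1 - h\<^sup>2)"
    by (simp add: power2_eq_square algebra_simps)
  finally show ?thesis .
qed

lemma of_real_powr_pos:
  "x > 0 \<Longrightarrow> complex_of_real x powr z = exp (z * of_real (ln x))"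
  by (simp add: powr_def Ln_of_real)

lemma interval_moebius_substitution_integrand:
  fixes \<alpha> :: complex and b h x :: real
  assumes h: "\<bar>h\<bar> < 1" and x: "x \<in> {-1<..<1}" "x \<noteq> 0"
  shows "\<bar>(1 - h\<^sup>2) / (1 + h * x)\<^sup>2\<bar> *\<^sub>R
           (of_real \<bar>interval_moebius h x - h\<bar> powr (\<alpha> - 1) * of_real ((1 - (interval_moebius h x)\<^sup>2) powr b))
       = of_real (1 - h\<^sup>2) powr (\<alpha> + of_real b) *
           (of_real \<bar>x\<bar> powr (\<alpha> - 1) * of_real ((1 - x\<^sup>2) powr b) *
            (1 + of_real (h * x)) powr (- (\<alpha> + of_real (2 * b + 1))))"
proof -
  define u where "u = 1 - h\<^sup>2"
  define v where "v = 1 + h * x"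
  define p where "p = \<bar>x\<bar>"
  define q where "q = 1 - x\<^sup>2"
  have u: "u > 0" unfolding u_def using h by (simp add: abs_less_iff power2_less_1_iff)
  have v: "v > 0" unfolding v_def using interval_moebius_denominator_pos[OF h, of x] x by auto
  have p: "p > 0" unfolding p_def using x by auto
  have q: "q > 0" unfolding q_def using x by (simp add: abs_less_iff power2_less_1_iff)
  have shift: "\<bar>interval_moebius h x - h\<bar> = p * u / v"
    using interval_moebius_minus_shift[of h x] u v by (simp add: u_def v_def p_def abs_mult)
  have weight: "1 - (interval_moebius h x)\<^sup>2 = q * u / v\<^sup>2"
    using one_minus_interval_moebius_sq[of h x] v by (simp add: u_def v_def q_def)
  have jacobian: "\<bar>(1 - h\<^sup>2) / (1 + h * x)\<^sup>2\<bar> = u / v\<^sup>2"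
    using u v by (simp add: u_def v_def)
  have "\<bar>(1 - h\<^sup>2) / (1 + h * x)\<^sup>2\<bar> *\<^sub>R
           (of_real \<bar>interval_moebius h x - h\<bar> powr (\<alpha> - 1) * of_real ((1 - (interval_moebius h x)\<^sup>2) powr b))
        = exp (of_real (ln u - 2 * ln v) + (\<alpha> - 1) * of_real (ln p + ln u - ln v)
               + of_real (b * (ln q + ln u - 2 * ln v)))"
  proof -
    have "u / v\<^sup>2 = exp (ln (u / v\<^sup>2))" using u v by simp
    also have "ln (u / v\<^sup>2) = ln u - 2 * ln v" using u v by (simp add: ln_div ln_realpow)
    finally have jac_exp: "u / v\<^sup>2 = exp (ln u - 2 * ln v)" .
    have weight_exp: "(q * u / v\<^sup>2) powr b = exp (b * (ln q + ln u - 2 * ln v))"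
      using q u v by (simp add: powr_def ln_mult ln_div ln_realpow)
    have "ln (p * u / v) = ln p + ln u - ln v" using p u v by (simp add: ln_mult ln_div)
    then have shift_exp: "complex_of_real (p * u / v) powr (\<alpha> - 1) = exp ((\<alpha> - 1) * of_real (ln p + ln u - ln v))"
      using p u v by (subst of_real_powr_pos) auto
    show ?thesis using jac_exp weight_exp shift_exp
      unfolding shift weight jacobian
      by (simp add: scaleR_conv_of_real exp_of_real[symmetric] exp_add[symmetric] mult_ac)
        (simp add: add.assoc)
  qed
  also have "\<dots> = exp ((\<alpha> + of_real b) * of_real (ln u) + ((\<alpha> - 1) * of_real (ln p) + of_real (b * ln q)
                 + (- (\<alpha> + of_real (2 * b + 1))) * of_real (ln v)))"
    by (rule arg_cong[where f = exp]) (simp add: algebra_simps)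
  also have "\<dots> = of_real (1 - h\<^sup>2) powr (\<alpha> + of_real b) *
           (of_real \<bar>x\<bar> powr (\<alpha> - 1) * of_real ((1 - x\<^sup>2) powr b) *
            (1 + of_real (h * x)) powr (- (\<alpha> + of_real (2 * b + 1))))"
  proof -
    have "1 + complex_of_real (h * x) = of_real v" by (simp add: v_def)
    moreover have "q powr b = exp (b * ln q)" using q by (simp add: powr_def)
    ultimately show ?thesis
      using u p v
      by (simp add: of_real_powr_pos u_def[symmetric] p_def[symmetric] q_def[symmetric]
          exp_of_real[symmetric] exp_add[symmetric])
  qed
  finally show ?thesis .
qed


section \<open>Integral representation\<close>

lemma sums_integral_dominated:
  fixes f :: "nat \<Rightarrow> 'a::euclidean_space \<Rightarrow> 'b::euclidean_space"
  assumes f: "\<And>n. (f n has_integral I n) S"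
    and F: "\<And>x. x \<in> S \<Longrightarrow> (\<lambda>n. f n x) sums F x"
    and D: "D integrable_on S" and bound: "\<And>N x. x \<in> S \<Longrightarrow> norm (\<Sum>n<N. f n x) \<le> D x"
  shows "F absolutely_integrable_on S" "I sums integral S F"
proof -
  have partial: "((\<lambda>x. \<Sum>n<N. f n x) has_integral (\<Sum>n<N. I n)) S" for N
    by (intro has_integral_sum f) auto
  have conv: "(\<lambda>N. \<Sum>n<N. f n x) \<longlonglongrightarrow> F x" if "x \<in> S" for x
    using F[OF that] by (simp add: sums_def)
  have lim: "F integrable_on S" "(\<lambda>N. integral S (\<lambda>x. \<Sum>n<N. f n x)) \<longlonglongrightarrow> integral S F"
    using dominated_convergence[of "\<lambda>N x. \<Sum>n<N. f n x" S D F] partial D bound conv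
    by (auto simp: has_integral_integrable)
  moreover have "integral S (\<lambda>x. \<Sum>n<N. f n x) = (\<Sum>n<N. I n)" for N
    using partial by (rule integral_unique)
  ultimately show "I sums integral S F" by (simp add: sums_def)
  have "norm (F x) \<le> D x" if "x \<in> S" for x
    by (rule LIMSEQ_le_const2[OF tendsto_norm[OF conv[OF that]]]) (use bound that in auto)
  then show "F absolutely_integrable_on S"
    using lim(1) D by (intro absolutely_integrable_integrable_bound[of S F D]) auto
qed

lemma integrable_abs_powr:
  assumes "s > 0"
  shows "(\<lambda>x::real. \<bar>x\<bar> powr (s - 1)) integrable_on {-1..1}"
proof -
  have "(\<lambda>x::real. x powr (s - 1)) integrable_on {0..1}"
    using integrable_on_powr_from_0[of "s - 1" 1] assms by simp
  then have right: "(\<lambda>x::real. \<bar>x\<bar> powr (s - 1)) integrable_on {0..1}"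
    by (rule integrable_spike_finite[of "{}", rotated 2]) auto
  then have left: "(\<lambda>x::real. \<bar>x\<bar> powr (s - 1)) integrable_on {-1..0}"
    using Henstock_Kurzweil_Integration.integrable_reflect_real[where f = "\<lambda>x::real. \<bar>x\<bar> powr (s - 1)" and a = 0 and b = 1] by simp
  show ?thesis by (rule Henstock_Kurzweil_Integration.integrable_combine[OF _ _ left right]) auto
qed

lemma norm_abs_powr_weight_le:
  fixes \<alpha> :: complex and b x :: real
  assumes b: "b \<ge> 0" and x: "x \<in> {-1..1}"
  shows "norm (of_real \<bar>x\<bar> powr (\<alpha> - 1) * of_real ((1 - x\<^sup>2) powr b)) * \<bar>x\<bar> ^ n \<le> \<bar>x\<bar> powr (Re \<alpha> - 1)"
proof -
  have "(1 - x\<^sup>2) powr b \<le> 1" using x b by (intro powr_le1) (auto simp: abs_square_le_1 abs_le_iff)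
  moreover have "\<bar>x\<bar> ^ n \<le> 1" using x by (intro power_le_one) auto
  ultimately have "(1 - x\<^sup>2) powr b * \<bar>x\<bar> ^ n \<le> 1 * 1" by (intro mult_mono) auto
  then have "\<bar>x\<bar> powr (Re \<alpha> - 1) * ((1 - x\<^sup>2) powr b * \<bar>x\<bar> ^ n) \<le> \<bar>x\<bar> powr (Re \<alpha> - 1)"
    by (intro mult_left_le) auto
  then show ?thesis by (simp add: norm_mult norm_powr_real_powr mult.assoc)
qed

lemma abs_powr_binomial_expansion:
  fixes b h :: real and \<alpha> c :: complex
  assumes b: "b \<ge> 0" and \<alpha>: "Re \<alpha> > 0" and h: "\<bar>h\<bar> < 1"
  defines "P \<equiv> \<lambda>x. of_real \<bar>x\<bar> powr (\<alpha> - 1) * of_real ((1 - x\<^sup>2) powr b) * (1 + of_real (h * x)) powr (- c)"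
  shows "P absolutely_integrable_on {-1..1}"
    and "(\<lambda>n. ((- c) gchoose n) * of_real h ^ n * ((1 + (-1)^n) * (Beta ((\<alpha> + of_nat n)/2) (of_real b + 1) / 2)))
           sums integral {-1..1} P"
proof -
  define Q where "Q x = of_real \<bar>x\<bar> powr (\<alpha> - 1) * of_real ((1 - x\<^sup>2) powr b)" for x :: real
  define f where "f n x = ((- c) gchoose n) * of_real h ^ n * (Q x * of_real x ^ n)" for n x
  define B where "B = (\<Sum>n. norm ((- c) gchoose n) * \<bar>h\<bar> ^ n)"
  have B: "summable (\<lambda>n. norm ((- c) gchoose n) * \<bar>h\<bar> ^ n)"
    using h by (intro summable_norm_gbinomial_minus) auto
  have Q_le: "norm (Q x) * \<bar>x\<bar> ^ n \<le> \<bar>x\<bar> powr (Re \<alpha> - 1)" if "x \<in> {-1..1}" for x n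
    unfolding Q_def using b that by (rule norm_abs_powr_weight_le)
  have f_int: "(f n has_integral ((- c) gchoose n) * of_real h ^ n *
                 ((1 + (-1)^n) * (Beta ((\<alpha> + of_nat n)/2) (of_real b + 1) / 2))) {-1..1}" for n
    unfolding f_def Q_def by (intro has_integral_mult_right has_integral_abs_powr_moment b \<alpha>)
  have f_sums: "(\<lambda>n. f n x) sums P x" if x: "x \<in> {-1..1}" for x
  proof -
    have "\<bar>h\<bar> * \<bar>x\<bar> \<le> \<bar>h\<bar>" using x by (intro mult_left_le) auto
    then have "norm (complex_of_real (h * x)) < 1"
      using h by (simp only: norm_of_real abs_mult)
    from sums_mult[OF gen_binomial_complex[OF this, of "- c"], of "Q x"]
    show ?thesis by (simp add: f_def P_def Q_def power_mult_distrib mult_ac)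
  qed
  have D_int: "(\<lambda>x. B * \<bar>x\<bar> powr (Re \<alpha> - 1)) integrable_on {-1..1}"
    using integrable_cmul[OF integrable_abs_powr[OF \<alpha>], of B] by simp
  have f_bound: "norm (\<Sum>n<N. f n x) \<le> B * \<bar>x\<bar> powr (Re \<alpha> - 1)" if x: "x \<in> {-1..1}" for N x
  proof -
    have "norm (\<Sum>n<N. f n x) \<le> (\<Sum>n<N. norm ((- c) gchoose n) * \<bar>h\<bar> ^ n * \<bar>x\<bar> powr (Re \<alpha> - 1))"
      unfolding f_def
      by (intro order_trans[OF norm_sum] sum_mono)
        (auto simp: norm_mult norm_power intro!: mult_left_mono Q_le[OF x])
    also have "\<dots> \<le> B * \<bar>x\<bar> powr (Re \<alpha> - 1)"
      unfolding B_def sum_distrib_right[symmetric]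
      by (intro mult_right_mono sum_le_suminf B) auto
    finally show ?thesis .
  qed
  show "P absolutely_integrable_on {-1..1}"
    using f_int f_sums D_int f_bound by (rule sums_integral_dominated(1))
  show "(\<lambda>n. ((- c) gchoose n) * of_real h ^ n * ((1 + (-1)^n) * (Beta ((\<alpha> + of_nat n)/2) (of_real b + 1) / 2)))
          sums integral {-1..1} P"
    using f_int f_sums D_int f_bound by (rule sums_integral_dominated(2))
qed

lemma integral_interval_moebius_substitution:
  fixes b h :: real and \<alpha> :: complex
  assumes b: "b \<ge> 0" and \<alpha>: "Re \<alpha> > 0" and h: "\<bar>h\<bar> < 1"
  shows "integral {-1..1} (\<lambda>t. of_real \<bar>t - h\<bar> powr (\<alpha> - 1) * of_real ((1 - t\<^sup>2) powr b)) =
         of_real (1 - h\<^sup>2) powr (\<alpha> + of_real b) *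
         integral {-1..1} (\<lambda>x. of_real \<bar>x\<bar> powr (\<alpha> - 1) * of_real ((1 - x\<^sup>2) powr b) *
                                (1 + of_real (h * x)) powr (- (\<alpha> + of_real (2 * b + 1))))"
proof -
  define f where "f t = of_real \<bar>t - h\<bar> powr (\<alpha> - 1) * of_real ((1 - t\<^sup>2) powr b)" for t
  define K where "K = of_real (1 - h\<^sup>2) powr (\<alpha> + of_real b)"
  define P where "P x = of_real \<bar>x\<bar> powr (\<alpha> - 1) * of_real ((1 - x\<^sup>2) powr b) *
                          (1 + of_real (h * x)) powr (- (\<alpha> + of_real (2 * b + 1)))" for x
  define J where "J x = (1 - h\<^sup>2) / (1 + h * x)\<^sup>2" for x
  have KP_abs: "(\<lambda>x. K * P x) absolutely_integrable_on {-1..1}"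
    using abs_powr_binomial_expansion(1)[OF b \<alpha> h, where c = "\<alpha> + of_real (2 * b + 1)"]
    unfolding P_def by (intro set_integrable_mult_right) auto
  have integrand: "\<bar>J x\<bar> *\<^sub>R f (interval_moebius h x) = K * P x" if "x \<in> {-1..1} - {-1, 0, 1}" for x
    using interval_moebius_substitution_integrand[OF h, of x \<alpha> b] that by (simp add: J_def f_def K_def P_def)
  have "(\<lambda>x. \<bar>J x\<bar> *\<^sub>R f (interval_moebius h x)) absolutely_integrable_on {-1..1}"
    by (rule absolutely_integrable_spike[OF KP_abs, of "{-1, 0, 1}"]) (use integrand in auto)
  moreover have "integral {-1..1} (\<lambda>x. \<bar>J x\<bar> *\<^sub>R f (interval_moebius h x)) = integral {-1..1} (\<lambda>x. K * P x)"
    by (rule integral_spike[of "{-1, 0, 1}"]) (use integrand in auto)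
  moreover have "(interval_moebius h has_field_derivative J x) (at x within {-1..1})" if "x \<in> {-1..1}" for x
    unfolding J_def using interval_moebius_denominator_pos[OF h that] by (intro has_field_derivative_interval_moebius) simp
  ultimately have "integral (interval_moebius h ` {-1..1}) f = integral {-1..1} (\<lambda>x. K * P x)"
    using has_absolute_integral_change_of_variables_real[of "{-1..1}" "interval_moebius h" J f]
      inj_on_interval_moebius[OF h] by auto
  then show ?thesis
    unfolding interval_moebius_image[OF h] by (simp add: f_def[abs_def] K_def P_def)
qed


section \<open>The entire extension\<close>

lemma norm_pochhammer_rGamma_Suc_le:
  fixes w :: complex and b :: real
  assumes b: "b \<ge> 0" and k: "Re w + real k \<ge> 0"
  shows "norm (pochhammer w (Suc k) * rGamma (w + of_nat (Suc k) + of_real b + 1))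
         \<le> norm (pochhammer w k * rGamma (w + of_nat k + of_real b + 1))"
proof -
  define v where "v = w + of_nat k"
  define u where "u = v + of_real (b + 1)"
  have Re_v: "Re v \<ge> 0" using k by (simp add: v_def)
  have "(norm v)\<^sup>2 \<le> (norm u)\<^sup>2"
    unfolding u_def cmod_power2 using Re_v b by (simp add: power2_eq_square algebra_simps)
  then have vu: "norm v \<le> norm u" by (simp add: power2_le_iff_abs_le)
  have "Re u > 0" using Re_v b by (simp add: u_def)
  then have u0: "u \<noteq> 0" by auto
  have "rGamma (w + of_nat (Suc k) + of_real b + 1) = rGamma u / u"
    using rGamma_plus1[of u] u0 by (simp add: u_def v_def field_simps)
  then have "norm (pochhammer w (Suc k) * rGamma (w + of_nat (Suc k) + of_real b + 1))
        = norm (pochhammer w k * rGamma u) * (norm v / norm u)"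
    by (simp add: pochhammer_rec' v_def norm_mult norm_divide mult_ac)
  also have "\<dots> \<le> norm (pochhammer w k * rGamma u)"
    using vu u0 by (intro mult_left_le) (auto simp: divide_le_eq_1)
  finally show ?thesis by (simp add: u_def v_def add_ac)
qed

lemma norm_pochhammer_rGamma_antimono:
  fixes w :: complex and b :: real
  assumes b: "b \<ge> 0" and N: "Re w + real N \<ge> 0" and "N \<le> k"
  shows "norm (pochhammer w k * rGamma (w + of_nat k + of_real b + 1))
         \<le> norm (pochhammer w N * rGamma (w + of_nat N + of_real b + 1))"
  using \<open>N \<le> k\<close>
proof (induction k rule: dec_induct)
  case (step k)
  with N have "Re w + real k \<ge> 0" by linarith
  from norm_pochhammer_rGamma_Suc_le[OF b this] step.IH show ?case by linarith
qed simp

lemma bounded_pochhammer_rGamma: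
  fixes b R :: real
  assumes b: "b \<ge> 0"
  obtains C where "\<And>(w::complex) k. norm w \<le> R \<Longrightarrow>
                     norm (pochhammer w k * rGamma (w + of_nat k + of_real b + 1)) \<le> C"
proof -
  define m where "m k w = pochhammer w k * rGamma (w + of_nat k + of_real b + 1)" for k and w :: complex
  define N where "N = nat \<lceil>R\<rceil>"
  define F where "F w = (\<Sum>j\<le>N. norm (m j w))" for w
  have F_cont: "continuous_on (cball 0 R) F"
    unfolding F_def m_def by (intro continuous_intros holomorphic_on_imp_continuous_on holomorphic_intros)
  obtain C where C: "\<And>w. w \<in> cball 0 R \<Longrightarrow> norm (F w) \<le> C"
    using compact_imp_bounded[OF compact_continuous_image[OF F_cont compact_cball]]
    unfolding bounded_iff by blast
  have "norm (m k w) \<le> C" if w: "norm w \<le> R" for w k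
  proof -
    have m_le_F: "norm (m j w) \<le> F w" if "j \<le> N" for j
      unfolding F_def using that by (intro member_le_sum) auto
    have "F w \<le> C" using C[of w] w by simp
    moreover have "norm (m k w) \<le> norm (m N w)" if "N \<le> k"
    proof -
      have "Re w + real N \<ge> 0"
        using abs_Re_le_cmod[of w] w unfolding N_def by linarith
      then show ?thesis
        unfolding m_def using \<open>N \<le> k\<close> by (rule norm_pochhammer_rGamma_antimono[OF b])
    qed
    ultimately show ?thesis using m_le_F[of k] m_le_F[of N] by (cases "k \<le> N") auto
  qed
  then show ?thesis using that unfolding m_def by blast
qed

lemma summable_even_terms:
  fixes f :: "nat \<Rightarrow> real"
  assumes "summable f" "\<And>n. f n \<ge> 0"
  shows "summable (\<lambda>k. f (2 * k))"
proof (rule summable_comparison_test[of _ "\<lambda>k. sum f {k * 2..<k * 2 + 2}"])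
  show "summable (\<lambda>k. sum f {k * 2..<k * 2 + 2})"
    using sums_group[OF summable_sums[OF assms(1)], of 2] by (simp add: sums_summable)
  have "{k * 2..<k * 2 + 2} = {2 * k, Suc (2 * k)}" for k by auto
  then show "\<exists>N. \<forall>k\<ge>N. norm (f (2 * k)) \<le> sum f {k * 2..<k * 2 + 2}"
    using assms(2) by (intro exI[of _ 0]) (simp add: add_increasing2)
qed

text \<open>\<open>g_coeff b \<alpha> k\<close> is the coefficient of \<open>h\<^sup>2\<^sup>k\<close> in the termwise integrated series, divided by
  \<open>Gamma (\<alpha> / 2)\<close>: the even moment \<open>Beta (\<alpha> / 2 + k) (b + 1)\<close> becomes
  \<open>pochhammer (\<alpha> / 2) k * Gamma (b + 1) * rGamma (\<alpha> / 2 + k + b + 1)\<close>, which is entire in \<open>\<alpha>\<close>.\<close>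

definition g_coeff :: "real \<Rightarrow> complex \<Rightarrow> nat \<Rightarrow> complex" where
  "g_coeff b \<alpha> k = ((- (\<alpha> + of_real (2 * b + 1))) gchoose (2 * k)) * pochhammer (\<alpha> / 2) k *
                    rGamma (\<alpha> / 2 + of_nat k + of_real b + 1)"

definition g_series :: "real \<Rightarrow> complex \<Rightarrow> complex \<Rightarrow> complex" where
  "g_series b \<alpha> z = (\<Sum>k. g_coeff b \<alpha> k * z ^ (2 * k))"

definition g_ext :: "real \<Rightarrow> complex \<Rightarrow> complex \<Rightarrow> complex" where
  "g_ext b \<alpha> z = (1 - z\<^sup>2) powr (\<alpha> + of_real b) * of_real (Gamma (b + 1)) * g_series b \<alpha> z"

lemma g_coeff_pochhammer:
  "g_coeff b \<alpha> k = pochhammer (\<alpha> + of_real (2 * b + 1)) (2 * k) / fact (2 * k) *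
                    (pochhammer (\<alpha> / 2) k * rGamma (\<alpha> / 2 + of_nat k + of_real b + 1))"
  unfolding g_coeff_def gbinomial_pochhammer minus_minus by (simp add: power_mult)

lemma holomorphic_g_coeff [holomorphic_intros]: "(\<lambda>\<alpha>. g_coeff b \<alpha> k) holomorphic_on A"
  unfolding g_coeff_pochhammer by (intro holomorphic_intros) auto

lemma continuous_on_g_coeff [continuous_intros]:
  "continuous_on A f \<Longrightarrow> continuous_on A (\<lambda>x. g_coeff b (f x) k)"
  using continuous_on_compose2[OF holomorphic_on_imp_continuous_on[OF holomorphic_g_coeff[of b k UNIV]], of A f]
  by auto

lemma g_series_majorant:
  fixes b R r :: real
  assumes b: "b \<ge> 0" and R: "R \<ge> 0" and r: "0 \<le> r" "r < 1"
  obtains M where "summable M"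
    "\<And>k \<alpha> z. norm \<alpha> \<le> R \<Longrightarrow> norm z \<le> r \<Longrightarrow> norm (g_coeff b \<alpha> k * z ^ (2 * k)) \<le> M k"
proof -
  obtain C where C: "\<And>(w::complex) k. norm w \<le> R \<Longrightarrow>
      norm (pochhammer w k * rGamma (w + of_nat k + of_real b + 1)) \<le> C"
    using bounded_pochhammer_rGamma[OF b] by blast
  define R' where "R' = R + 2 * b + 1"
  define p where "p n = pochhammer R' n / fact n * r ^ n" for n
  have p_nonneg: "p n \<ge> 0" for n
    unfolding p_def R'_def using R b r by (intro mult_nonneg_nonneg divide_nonneg_nonneg pochhammer_nonneg') auto
  have "summable (\<lambda>k. p (2 * k))"
    unfolding p_def R'_def using R b r p_nonneg
    by (intro summable_even_terms summable_pochhammer_geometric) (auto simp: p_def R'_def)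
  then have "summable (\<lambda>k. max C 0 * p (2 * k))" by (rule summable_mult)
  moreover have "norm (g_coeff b \<alpha> k * z ^ (2 * k)) \<le> max C 0 * p (2 * k)"
    if \<alpha>: "norm \<alpha> \<le> R" and z: "norm z \<le> r" for \<alpha> z :: complex and k
  proof -
    have "norm (complex_of_real (2 * b + 1)) = 2 * b + 1" using b by (simp only: norm_of_real)
    then have "norm (\<alpha> + of_real (2 * b + 1)) \<le> R'"
      using norm_triangle_ineq[of \<alpha> "of_real (2 * b + 1)"] \<alpha> unfolding R'_def by linarith
    then have "norm (pochhammer (\<alpha> + of_real (2 * b + 1)) (2 * k)) \<le> pochhammer R' (2 * k)"
      by (rule order_trans[OF norm_pochhammer_le pochhammer_mono[OF norm_ge_zero]])
    then have binom: "norm (pochhammer (\<alpha> + of_real (2 * b + 1)) (2 * k) / fact (2 * k))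
                        \<le> pochhammer R' (2 * k) / fact (2 * k)"
      by (simp add: norm_divide divide_right_mono)
    have gamma: "norm (pochhammer (\<alpha> / 2) k * rGamma (\<alpha> / 2 + of_nat k + of_real b + 1)) \<le> max C 0"
      using C[of "\<alpha> / 2" k] \<alpha> R by (simp add: norm_divide) 
    have "norm (z ^ (2 * k)) \<le> r ^ (2 * k)" using z by (simp add: norm_power power_mono)
    moreover have "0 \<le> pochhammer R' (2 * k)"
      using R b by (intro pochhammer_nonneg') (simp add: R'_def)
    ultimately have "norm (g_coeff b \<alpha> k * z ^ (2 * k))
            \<le> pochhammer R' (2 * k) / fact (2 * k) * max C 0 * r ^ (2 * k)"
      using binom gamma unfolding g_coeff_pochhammer norm_mult
      by (intro mult_mono) auto
    then show ?thesis by (simp add: p_def mult_ac)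
  qed
  ultimately show ?thesis using that by blast
qed

lemma uniform_limit_g_series:
  fixes b R r :: real
  assumes b: "b \<ge> 0" and R: "R \<ge> 0" and r: "0 \<le> r" "r < 1"
    and A: "\<And>x. x \<in> A \<Longrightarrow> norm (a x) \<le> R \<and> norm (z x) \<le> r"
  shows "uniform_limit A (\<lambda>N x. \<Sum>k<N. g_coeff b (a x) k * z x ^ (2 * k))
           (\<lambda>x. g_series b (a x) (z x)) sequentially"
proof -
  obtain M where M: "summable M"
    "\<And>k \<alpha> z. norm \<alpha> \<le> R \<Longrightarrow> norm z \<le> r \<Longrightarrow> norm (g_coeff b \<alpha> k * z ^ (2 * k)) \<le> M k"
    using g_series_majorant[OF b R r] by blast
  show ?thesis
    unfolding g_series_def by (rule Weierstrass_m_test[OF _ M(1)]) (use A M(2) in auto)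
qed

lemma continuous_on_g_series:
  assumes b: "b \<ge> 0"
  shows "continuous_on (UNIV \<times> ball 0 1) (\<lambda>p. g_series b (fst p) (snd p))"
proof (rule continuous_at_imp_continuous_on, intro ballI)
  fix p :: "complex \<times> complex" assume p: "p \<in> UNIV \<times> ball 0 1"
  define R where "R = norm (fst p) + 1"
  define r where "r = (1 + norm (snd p)) / 2"
  have r: "0 \<le> r" "r < 1" "norm (snd p) < r" using p by (auto simp: r_def)
  have R: "R \<ge> 0" "norm (fst p) < R" by (auto simp: R_def)
  define K where "K = cball (0::complex) R \<times> cball (0::complex) r"
  have "uniform_limit K (\<lambda>N x. \<Sum>k<N. g_coeff b (fst x) k * snd x ^ (2 * k))
          (\<lambda>x. g_series b (fst x) (snd x)) sequentially"
    by (rule uniform_limit_g_series[OF b R(1) r(1,2)]) (auto simp: K_def)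
  then have "continuous_on K (\<lambda>x. g_series b (fst x) (snd x))"
    by (rule uniform_limit_theorem[rotated]) (auto intro!: always_eventually continuous_intros)
  moreover have "p \<in> interior K"
    using R r by (simp add: K_def interior_Times mem_Times_iff)
  ultimately show "isCont (\<lambda>x. g_series b (fst x) (snd x)) p" by (rule continuous_on_interior)
qed

lemma holomorphic_g_series:
  assumes b: "b \<ge> 0"
  shows "g_series b \<alpha> holomorphic_on ball 0 1"
proof (rule holomorphic_uniform_sequence[where f = "\<lambda>N z. \<Sum>k<N. g_coeff b \<alpha> k * z ^ (2 * k)"])
  fix z0 :: complex assume z0: "z0 \<in> ball 0 1"
  define d where "d = (1 - norm z0) / 2"
  have d: "d > 0" using z0 by (auto simp: d_def)
  have sub: "cball z0 d \<subseteq> cball 0 ((1 + norm z0) / 2)"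
  proof
    fix x assume "x \<in> cball z0 d"
    then have "norm x \<le> norm z0 + d"
      using norm_triangle_ineq2[of x z0] by (simp add: dist_norm norm_minus_commute)
    then have "norm x \<le> (1 + norm z0) / 2" unfolding d_def by (simp add: field_simps)
    then show "x \<in> cball 0 ((1 + norm z0) / 2)" by simp
  qed
  have "uniform_limit (cball z0 d) (\<lambda>N z. \<Sum>k<N. g_coeff b ((\<lambda>_. \<alpha>) z) k * id z ^ (2 * k))
          (\<lambda>z. g_series b ((\<lambda>_. \<alpha>) z) (id z)) sequentially"
    by (rule uniform_limit_g_series[OF b, of "norm \<alpha>" "(1 + norm z0) / 2"]) (use z0 sub in auto)
  moreover have "cball z0 d \<subseteq> ball 0 1" using sub z0 by auto
  ultimately show "\<exists>d>0. cball z0 d \<subseteq> ball 0 1 \<and>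
      uniform_limit (cball z0 d) (\<lambda>N z. \<Sum>k<N. g_coeff b \<alpha> k * z ^ (2 * k)) (g_series b \<alpha>) sequentially"
    using d by auto
qed (auto intro!: holomorphic_intros)

lemma holomorphic_g_series_param:
  assumes b: "b \<ge> 0" and z: "norm z < 1"
  shows "(\<lambda>\<alpha>. g_series b \<alpha> z) holomorphic_on UNIV"
proof (rule holomorphic_uniform_sequence[where f = "\<lambda>N \<alpha>. \<Sum>k<N. g_coeff b \<alpha> k * z ^ (2 * k)"])
  fix \<alpha>0 :: complex
  have "uniform_limit (cball \<alpha>0 1) (\<lambda>N \<alpha>. \<Sum>k<N. g_coeff b (id \<alpha>) k * (\<lambda>_. z) \<alpha> ^ (2 * k))
          (\<lambda>\<alpha>. g_series b (id \<alpha>) ((\<lambda>_. z) \<alpha>)) sequentially"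
  proof (rule uniform_limit_g_series[OF b, of "norm \<alpha>0 + 1" "norm z"])
    fix \<alpha> assume "\<alpha> \<in> cball \<alpha>0 1"
    then have "norm \<alpha> \<le> norm \<alpha>0 + 1"
      using norm_triangle_ineq2[of \<alpha> \<alpha>0] by (simp add: dist_norm norm_minus_commute)
    then show "norm (id \<alpha>) \<le> norm \<alpha>0 + 1 \<and> norm ((\<lambda>_. z) \<alpha>) \<le> norm z" by simp
  qed (use z in auto)
  then show "\<exists>d>0. cball \<alpha>0 d \<subseteq> UNIV \<and>
      uniform_limit (cball \<alpha>0 d) (\<lambda>N \<alpha>. \<Sum>k<N. g_coeff b \<alpha> k * z ^ (2 * k)) (\<lambda>\<alpha>. g_series b \<alpha> z) sequentially"
    by (intro exI[of _ 1]) auto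
qed (auto intro!: holomorphic_intros)

lemma Re_one_minus_sq_pos:
  fixes z :: complex
  assumes "norm z < 1"
  shows "Re (1 - z\<^sup>2) > 0"
proof -
  have "Re (z\<^sup>2) \<le> (norm z)\<^sup>2" using complex_Re_le_cmod[of "z\<^sup>2"] by (simp add: norm_power)
  also have "\<dots> < 1" using assms by (simp add: power_less_one_iff abs_square_less_1)
  finally show ?thesis by simp
qed

lemma continuous_on_g_ext:
  assumes b: "b \<ge> 0"
  shows "continuous_on (UNIV \<times> ball 0 1) (\<lambda>p. g_ext b (fst p) (snd p))"
  unfolding g_ext_def
proof (intro continuous_intros continuous_on_g_series[OF b] continuous_on_powr_complex)
  show "UNIV \<times> ball 0 1 \<subseteq> {p. 0 \<le> Re (1 - (snd p)\<^sup>2) \<or> Im (1 - (snd p)\<^sup>2) \<noteq> 0}"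
    using Re_one_minus_sq_pos by (force simp: less_imp_le)
  fix p :: "complex \<times> complex" assume "p \<in> UNIV \<times> ball 0 1" "1 - (snd p)\<^sup>2 = 0"
  then show "0 < Re (fst p + of_real b)" using Re_one_minus_sq_pos[of "snd p"] by auto
qed

lemma holomorphic_g_ext:
  assumes b: "b \<ge> 0"
  shows "g_ext b \<alpha> holomorphic_on ball 0 1"
proof -
  have "1 - z\<^sup>2 \<notin> \<real>\<^sub>\<le>\<^sub>0" if "z \<in> ball 0 1" for z :: complex
    using Re_one_minus_sq_pos[of z] that by (auto simp: complex_nonpos_Reals_iff)
  then show ?thesis
    unfolding g_ext_def by (intro holomorphic_intros holomorphic_g_series[OF b] holomorphic_on_powr) auto
qed

lemma holomorphic_g_ext_param:
  assumes b: "b \<ge> 0" and z: "norm z < 1"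
  shows "(\<lambda>\<alpha>. g_ext b \<alpha> z) holomorphic_on UNIV"
  unfolding g_ext_def
  by (intro holomorphic_intros holomorphic_g_series_param[OF b z] holomorphic_on_powr_right)

lemma g_ext_eq_integral:
  fixes b h :: real and \<alpha> :: complex
  assumes b: "b \<ge> 0" and \<alpha>: "Re \<alpha> > 0" and h: "\<bar>h\<bar> < 1"
  shows "g_ext b \<alpha> (of_real h) =
           (1 / Gamma (\<alpha> / 2)) * integral {-1..1} (\<lambda>t. of_real \<bar>t - h\<bar> powr (\<alpha> - 1) * of_real ((1 - t\<^sup>2) powr b))"
proof -
  define c where "c = \<alpha> + of_real (2 * b + 1)"
  define I where "I = integral {-1..1} (\<lambda>x. of_real \<bar>x\<bar> powr (\<alpha> - 1) * of_real ((1 - x\<^sup>2) powr b) *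
                                               (1 + of_real (h * x)) powr (- c))"
  define t where "t n = ((- c) gchoose n) * of_real h ^ n *
                          ((1 + (-1)^n) * (Beta ((\<alpha> + of_nat n) / 2) (of_real b + 1) / 2))" for n
  have \<alpha>_half: "\<alpha> / 2 \<notin> \<int>\<^sub>\<le>\<^sub>0" using \<alpha> by (auto elim!: nonpos_Ints_cases)
  have b_succ: "b + 1 \<notin> \<int>\<^sub>\<le>\<^sub>0" using b by (auto dest: nonpos_Ints_nonpos)
  have "t sums I"
    unfolding t_def I_def by (rule abs_powr_binomial_expansion(2)[OF b \<alpha> h])
  moreover have "t n = 0" if "n \<notin> range (\<lambda>k. 2 * k)" for n
  proof -
    from that have "odd n" by (auto elim: evenE)
    then show ?thesis by (simp add: t_def)
  qed
  ultimately have "(\<lambda>k. t (2 * k)) sums I"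
    by (subst sums_mono_reindex) (auto simp: strict_mono_def)
  moreover have "t (2 * k) = Gamma (\<alpha> / 2) * of_real (Gamma (b + 1)) * (g_coeff b \<alpha> k * of_real h ^ (2 * k))" for k
  proof -
    have Gamma_shift: "Gamma (\<alpha> / 2 + of_nat k) = Gamma (\<alpha> / 2) * pochhammer (\<alpha> / 2) k"
      using \<alpha>_half by (simp add: pochhammer_Gamma Gamma_eq_zero_iff)
    have half: "(\<alpha> + of_nat (2 * k)) / 2 = \<alpha> / 2 + of_nat k" by (simp add: field_simps)
    show ?thesis
      unfolding t_def g_coeff_def c_def Beta_altdef half Gamma_shift
      by (simp add: Gamma_complex_of_real[symmetric] add_ac mult_ac)
  qed
  ultimately have "(\<lambda>k. g_coeff b \<alpha> k * of_real h ^ (2 * k)) sums (I / (Gamma (\<alpha> / 2) * of_real (Gamma (b + 1))))"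
    using sums_divide[of "\<lambda>k. t (2 * k)" I "Gamma (\<alpha> / 2) * of_real (Gamma (b + 1))"] \<alpha>_half b_succ
    by (simp add: Gamma_eq_zero_iff)
  then have "g_series b \<alpha> (of_real h) = I / (Gamma (\<alpha> / 2) * of_real (Gamma (b + 1)))"
    unfolding g_series_def by (rule sums_unique[symmetric])
  then show ?thesis
    using integral_interval_moebius_substitution[OF b \<alpha> h] b
    by (simp add: g_ext_def I_def c_def Gamma_real_pos less_imp_neq[symmetric])
qed


section \<open>Smoothness in the real variable\<close>

lemma norm_higher_deriv_diff_le:
  fixes f g :: "complex \<Rightarrow> complex"
  assumes f: "f holomorphic_on S" and g: "g holomorphic_on S" and S: "open S"
    and r: "0 < r" "cball z r \<subseteq> S" and close: "\<And>w. w \<in> cball z r \<Longrightarrow> norm (f w - g w) \<le> \<eta>"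
  shows "norm ((deriv ^^ k) f z - (deriv ^^ k) g z) \<le> fact k * \<eta> / r ^ k"
proof -
  have "z \<in> S" using r by auto
  have "(\<lambda>w. f w - g w) holomorphic_on ball z r"
    using r ball_subset_cball by (intro holomorphic_intros holomorphic_on_subset[OF f] holomorphic_on_subset[OF g]) auto
  moreover have "continuous_on (cball z r) (\<lambda>w. f w - g w)"
    using r by (intro continuous_intros holomorphic_on_imp_continuous_on holomorphic_on_subset[OF f]
        holomorphic_on_subset[OF g]) auto
  ultimately have "norm ((deriv ^^ k) (\<lambda>w. f w - g w) z) \<le> fact k * \<eta> / r ^ k"
    using close r(1) by (intro Cauchy_inequality) (auto simp: dist_norm)
  then show ?thesis using higher_deriv_diff[OF f g S \<open>z \<in> S\<close>] by simp
qed

lemma uniformly_close_param: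
  fixes H :: "'a::heine_borel \<Rightarrow> 'b::metric_space \<Rightarrow> 'c::metric_space"
  assumes cont: "continuous_on (UNIV \<times> K) (\<lambda>p. H (fst p) (snd p))" and K: "compact K" and \<eta>: "\<eta> > 0"
  obtains d where "d > 0" "\<And>a w. dist a a0 < d \<Longrightarrow> w \<in> K \<Longrightarrow> dist (H a w) (H a0 w) < \<eta>"
proof -
  have "uniformly_continuous_on (cball a0 1 \<times> K) (\<lambda>p. H (fst p) (snd p))"
    by (intro compact_uniformly_continuous continuous_on_subset[OF cont] compact_Times compact_cball K) auto
  then obtain d1 where d1: "d1 > 0" "\<And>p q. p \<in> cball a0 1 \<times> K \<Longrightarrow> q \<in> cball a0 1 \<times> K \<Longrightarrow>
      dist q p < d1 \<Longrightarrow> dist (H (fst q) (snd q)) (H (fst p) (snd p)) < \<eta>"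
    using \<eta> unfolding uniformly_continuous_on_def by metis
  show ?thesis
  proof (rule that[of "min d1 1"])
    fix a w assume "dist a a0 < min d1 1" "w \<in> K"
    then show "dist (H a w) (H a0 w) < \<eta>"
      using d1(2)[of "(a0, w)" "(a, w)"] by (auto simp: dist_Pair_Pair dist_commute)
  qed (use d1 in auto)
qed

text \<open>\<open>H a\<close> is uniformly close to \<open>H a0\<close> on a disc around \<open>z0\<close> for \<open>a\<close> near \<open>a0\<close>, and the
  Cauchy estimates transfer this to all derivatives.\<close>

lemma continuous_on_higher_deriv_param:
  fixes H :: "'a::heine_borel \<Rightarrow> complex \<Rightarrow> complex"
  assumes S: "open S" and cont: "continuous_on (UNIV \<times> S) (\<lambda>p. H (fst p) (snd p))"
    and hol: "\<And>a. H a holomorphic_on S"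
  shows "continuous_on (UNIV \<times> S) (\<lambda>p. (deriv ^^ k) (H (fst p)) (snd p))"
  unfolding continuous_on_iff
proof (intro ballI allI impI)
  fix p0 :: "'a \<times> complex" and \<epsilon> :: real
  assume p0: "p0 \<in> UNIV \<times> S" and \<epsilon>: "\<epsilon> > 0"
  obtain a0 z0 where p0_eq: "p0 = (a0, z0)" and z0: "z0 \<in> S" using p0 by (cases p0) auto
  obtain \<rho> where \<rho>: "\<rho> > 0" "cball z0 \<rho> \<subseteq> S" using S z0 open_contains_cball by blast
  define \<eta> where "\<eta> = \<epsilon> * (\<rho> / 2) ^ k / (4 * fact k)"
  have "\<eta> > 0" using \<epsilon> \<rho> by (simp add: \<eta>_def)
  then obtain d1 where d1: "d1 > 0"
    "\<And>a w. dist a a0 < d1 \<Longrightarrow> w \<in> cball z0 \<rho> \<Longrightarrow> dist (H a w) (H a0 w) < \<eta>"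
    using uniformly_close_param[OF continuous_on_subset[OF cont] compact_cball] \<rho> by blast
  have "isCont ((deriv ^^ k) (H a0)) z0"
    using continuous_on_interior[OF holomorphic_on_imp_continuous_on[OF holomorphic_higher_deriv[OF hol S]]]
      z0 S by (simp add: interior_open)
  then obtain d2 where d2: "d2 > 0"
    "\<And>z. dist z z0 < d2 \<Longrightarrow> dist ((deriv ^^ k) (H a0) z) ((deriv ^^ k) (H a0) z0) < \<epsilon> / 2"
    using \<epsilon> unfolding continuous_at_eps_delta by (metis half_gt_zero)
  define d where "d = min d1 (min d2 (\<rho> / 2))"
  show "\<exists>d>0. \<forall>p\<in>UNIV \<times> S. dist p p0 < d \<longrightarrow>
          dist ((deriv ^^ k) (H (fst p)) (snd p)) ((deriv ^^ k) (H (fst p0)) (snd p0)) < \<epsilon>"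
  proof (intro exI[of _ d] conjI ballI impI)
    show "d > 0" using d1 d2 \<rho> by (simp add: d_def)
    fix p assume "p \<in> UNIV \<times> S" and "dist p p0 < d"
    then obtain a z where p_eq: "p = (a, z)" and da: "dist a a0 < d" and dz: "dist z z0 < d"
      using dist_fst_le[of p p0] dist_snd_le[of p p0] p0_eq by (cases p) auto
    have cz: "cball z (\<rho> / 2) \<subseteq> cball z0 \<rho>"
      using dz by (intro cball_subset_cball_iff[THEN iffD2]) (auto simp: d_def dist_commute)
    have "norm ((deriv ^^ k) (H a) z - (deriv ^^ k) (H a0) z) \<le> fact k * \<eta> / (\<rho> / 2) ^ k"
      using \<rho> cz d1(2)[of a] da
      by (intro norm_higher_deriv_diff_le[OF hol hol S]) (auto simp: d_def dist_norm less_imp_le)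
    also have "\<dots> = \<epsilon> / 4" using \<rho> by (simp add: \<eta>_def field_simps)
    finally have "dist ((deriv ^^ k) (H a) z) ((deriv ^^ k) (H a0) z) \<le> \<epsilon> / 4"
      by (simp add: dist_norm)
    moreover have "dist ((deriv ^^ k) (H a0) z) ((deriv ^^ k) (H a0) z0) < \<epsilon> / 2"
      using d2(2) dz by (simp add: d_def)
    ultimately show "dist ((deriv ^^ k) (H (fst p)) (snd p)) ((deriv ^^ k) (H (fst p0)) (snd p0)) < \<epsilon>"
      using dist_triangle[of "(deriv ^^ k) (H a) z" "(deriv ^^ k) (H a0) z0" "(deriv ^^ k) (H a0) z"] \<epsilon>
      by (simp add: p_eq p0_eq)
  qed
qed

lemma has_vector_derivative_higher_deriv_of_real:
  fixes f :: "complex \<Rightarrow> complex"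
  assumes "f holomorphic_on S" "open S" "of_real x \<in> S"
  shows "((\<lambda>t. (deriv ^^ k) f (of_real t)) has_vector_derivative (deriv ^^ Suc k) f (of_real x)) (at x)"
proof -
  have "((deriv ^^ k) f has_field_derivative deriv ((deriv ^^ k) f) (of_real x)) (at (of_real x))"
    using assms by (intro holomorphic_derivI[OF holomorphic_higher_deriv]) auto
  from has_vector_derivative_real_field[OF this] show ?thesis by simp
qed

lemma continuous_on_higher_deriv_g_ext_of_real:
  assumes b: "b \<ge> 0"
  shows "continuous_on (UNIV \<times> {-1<..<1}) (\<lambda>(\<alpha>, h). (deriv ^^ k) (g_ext b \<alpha>) (of_real h))"
proof -
  have "continuous_on (UNIV \<times> {-1<..<1}) (\<lambda>p::complex \<times> real. (fst p, complex_of_real (snd p)))"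
    by (intro continuous_intros)
  moreover have "(\<lambda>p::complex \<times> real. (fst p, complex_of_real (snd p))) ` (UNIV \<times> {-1<..<1})
                   \<subseteq> UNIV \<times> ball 0 1"
    by (auto simp: abs_less_iff)
  ultimately have "continuous_on (UNIV \<times> {-1<..<1})
      (\<lambda>p. (\<lambda>q. (deriv ^^ k) (g_ext b (fst q)) (snd q)) (fst p, complex_of_real (snd p)))"
    by (rule continuous_on_compose2[OF continuous_on_higher_deriv_param[OF open_ball
          continuous_on_g_ext[OF b] holomorphic_g_ext[OF b]]])
  then show ?thesis by (simp add: case_prod_unfold)
qed

lemma g_ext_at_minus_2b:
  fixes b :: real and z :: complex
  assumes b: "b \<ge> 0" and z: "norm z < 1"
  shows "g_ext b (- of_real (2 * b)) z = of_real (Gamma (b + 1))"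
proof -
  have coeff: "g_coeff b (- of_real (2 * b)) k * z ^ (2 * k) = (of_real b gchoose k) * (- (z\<^sup>2)) ^ k" for k
  proof -
    have "g_coeff b (- of_real (2 * b)) k = pochhammer (- of_real b) k / fact k"
      unfolding g_coeff_pochhammer
      by (simp add: pochhammer_fact[symmetric] rGamma_inverse_Gamma Gamma_fact field_simps)
    also have "\<dots> = (-1) ^ k * (of_real b gchoose k)"
      by (simp add: gbinomial_pochhammer flip: power_mult_distrib)
    finally have "g_coeff b (- of_real (2 * b)) k = (-1) ^ k * (of_real b gchoose k)" .
    moreover have "z ^ (2 * k) = (z\<^sup>2) ^ k" by (simp add: power_mult)
    ultimately show ?thesis unfolding power_minus[of "z\<^sup>2"] by (simp only: mult_ac)
  qed
  have "norm (- (z\<^sup>2)) < 1" using z by (simp add: norm_power power_less_one_iff abs_square_less_1)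
  from gen_binomial_complex[OF this, of "of_real b"]
  have "g_series b (- of_real (2 * b)) z = (1 - z\<^sup>2) powr of_real b"
    unfolding g_series_def coeff by (simp add: sums_iff)
  moreover have "1 - z\<^sup>2 \<noteq> 0" using Re_one_minus_sq_pos[OF z] by auto
  ultimately show ?thesis
    by (simp add: g_ext_def powr_def exp_add[symmetric] algebra_simps flip: mult.assoc)
qed

theorem lemma2p2:
  fixes n :: nat
  assumes "n > 2"
  shows "\<exists>G :: complex \<Rightarrow> real \<Rightarrow> complex.
           (\<forall>h\<in>{-1<..<1}. (\<lambda>\<alpha>. G \<alpha> h) holomorphic_on UNIV)
         \<and> (\<forall>h\<in>{-1<..<1}. \<forall>\<alpha>. Re \<alpha> > 0 \<longrightarrow> G \<alpha> h = g_int n \<alpha> h)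
         \<and> (\<exists>D :: nat \<Rightarrow> complex \<Rightarrow> real \<Rightarrow> complex.
               D 0 = G
             \<and> (\<forall>k \<alpha>. \<forall>h\<in>{-1<..<1}.
                   ((\<lambda>x. D k \<alpha> x) has_vector_derivative D (Suc k) \<alpha> h) (at h))
             \<and> (\<forall>k. continuous_on (UNIV \<times> {-1<..<1}) (\<lambda>(\<alpha>, h). D k \<alpha> h)))
         \<and> (\<forall>h\<in>{-1<..<1}. G (3 - of_nat n) h = complex_of_real (Gamma ((real n - 1) / 2)))"
proof -
  define b where "b = (real n - 3) / 2"
  have b: "b \<ge> 0" using assms by (simp add: b_def)
  define D where "D k \<alpha> h = (deriv ^^ k) (g_ext b \<alpha>) (of_real h)" for k \<alpha> h
  have disc: "of_real h \<in> ball (0::complex) 1" if "h \<in> {-1<..<1}" for h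
    using that by (simp add: abs_less_iff)
  have "(\<lambda>\<alpha>. D 0 \<alpha> h) holomorphic_on UNIV" if "h \<in> {-1<..<1}" for h
    using holomorphic_g_ext_param[OF b] disc[OF that] by (simp add: D_def)
  moreover have "D 0 \<alpha> h = g_int n \<alpha> h" if "h \<in> {-1<..<1}" "Re \<alpha> > 0" for \<alpha> h
    using g_ext_eq_integral[OF b, of \<alpha> h] that by (simp add: D_def g_int_def b_def abs_less_iff)
  moreover have "((\<lambda>x. D k \<alpha> x) has_vector_derivative D (Suc k) \<alpha> h) (at h)" if "h \<in> {-1<..<1}" for k \<alpha> h
    unfolding D_def using holomorphic_g_ext[OF b] disc[OF that]
    by (rule has_vector_derivative_higher_deriv_of_real[OF _ open_ball])
  moreover have "continuous_on (UNIV \<times> {-1<..<1}) (\<lambda>(\<alpha>, h). D k \<alpha> h)" for k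
    unfolding D_def by (rule continuous_on_higher_deriv_g_ext_of_real[OF b])
  moreover have "D 0 (3 - of_nat n) h = of_real (Gamma ((real n - 1) / 2))" if "h \<in> {-1<..<1}" for h
  proof -
    have parameters: "(3 - of_nat n :: complex) = - of_real (2 * b)" "(real n - 1) / 2 = b + 1"
      by (simp_all add: b_def field_simps)
    show ?thesis unfolding D_def parameters using g_ext_at_minus_2b[OF b] disc[OF that] by simp
  qed
  ultimately show ?thesis by (intro exI[of _ "D 0"] exI[of _ D] conjI) auto
qed

end
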